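(* Suppose $\mathbf{v}=(v_0,\dots,v_{n-1})\in\mathrm{GF}(q^m)^n$ has rank $r\ge1$. Then $\mathcal{L}=\langle\mathbf{v}\rangle^\perp$ is equivalent to the $(n-r)$-th order $\mathbf{B}$-elementary extension (for some $\mathbf{B}$) of an $(r,r-1)$ linear code over $\mathrm{GF}(q^m)$ with minimum rank distance $2$.
   Context: $q$ is a prime power. For $\mathbf{x}\in\mathrm{GF}(q^m)^N$, $\mathrm{rk}(\mathbf{x})$ is the dimension over $\mathrm{GF}(q)$ of the $\mathrm{GF}(q)$-span of its coordinates; the rank distance is $\mathrm{rk}(\mathbf{x}-\mathbf{y})$ and the minimum rank distance of a code is its minimum over pairs of distinct codewords. An $(N,K)$ linear code is a $K$-dimensional $\mathrm{GF}(q^m)$-subspace of $\mathrm{GF}(q^m)^N$. $\langle\mathbf{v}\rangle=\{a\mathbf{v}:a\in\mathrm{GF}(q^m)\}$, $S^\perp=\{\mathbf{u}:\sum_iu_is_i=0\ \forall\mathbf{s}\in S\}$. For $s\ge1$ and an $s\times r$ matrix $\mathbf{B}$ over $\mathrm{GF}(q)$, the $s$-th order $\mathbf{B}$-elementary extension of a linear code $\mathcal{C}_0\subseteq\mathrm{GF}(q^m)^r$ is $\{(c_0,\dots,c_{r+s-1})\in\mathrm{GF}(q^m)^{r+s}:(c_0,\dots,c_{r-1})-(c_r,\dots,c_{r+s-1})\mathbf{B}\in\mathcal{C}_0\}$; the $0$-th order extension is $\mathcal{C}_0$. Two codes $\mathcal{C},\mathcal{C}'\subseteq\mathrm{GF}(q^m)^n$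 are equivalent (for the rank metric) if $\mathcal{C}'=\{\mathbf{c}\mathbf{M}:\mathbf{c}\in\mathcal{C}\}$ for some invertible $n\times n$ matrix $\mathbf{M}$ over $\mathrm{GF}(q)$. *)

theory Defs
  imports Main
begin

text \<open>GF(q^m) is modelled by a finite field type 'k::field; GF(q) by a subfield F of it.
  Vectors of length N over GF(q^m) are functions nat => 'k::field vanishing from index N on.\<close>

definition subfield :: "'k::field set \<Rightarrow> bool" where
  "subfield F \<longleftrightarrow> 0 \<in> F \<and> 1 \<in> F \<and> (\<forall>x\<in>F. \<forall>y\<in>F. x + y \<in> F \<and> x * y \<in> F)
     \<and> (\<forall>x\<in>F. - x \<in> F \<and> inverse x \<in> F)"

definition vecs :: "nat \<Rightarrow> (nat \<Rightarrow> 'k::field) set" where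
  "vecs N = {v. \<forall>i\<ge>N. v i = 0}"

definition F_indep :: "'k::field set \<Rightarrow> (nat \<Rightarrow> 'k::field) \<Rightarrow> nat \<Rightarrow> bool" where
  "F_indep F e d \<longleftrightarrow>
     (\<forall>c. (\<forall>j<d. c j \<in> F) \<and> (\<Sum>j<d. c j * e j) = 0 \<longrightarrow> (\<forall>j<d. c j = 0))"

definition F_span :: "'k::field set \<Rightarrow> 'k::field set \<Rightarrow> 'k::field set" where
  "F_span F S = {x. \<exists>(d::nat) c e. (\<forall>j<d. c j \<in> F \<and> e j \<in> S) \<and> x = (\<Sum>j<d. c j * e j)}"

definition F_dim :: "'k::field set \<Rightarrow> 'k::field set \<Rightarrow> nat" where
  "F_dim F V = (THE d. \<exists>e. F_indep F e d \<and> F_span F (e ` {..<d}) = V)"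

definition rk :: "'k::field set \<Rightarrow> nat \<Rightarrow> (nat \<Rightarrow> 'k::field) \<Rightarrow> nat" where
  "rk F N x = F_dim F (F_span F (x ` {..<N}))"

definition lin_code :: "nat \<Rightarrow> nat \<Rightarrow> (nat \<Rightarrow> 'k::field) set \<Rightarrow> bool" where
  "lin_code N K C \<longleftrightarrow> (\<exists>b :: nat \<Rightarrow> nat \<Rightarrow> 'k::field.
      (\<forall>j<K. b j \<in> vecs N) \<and>
      (\<forall>a. (\<forall>i. (\<Sum>j<K. a j * b j i) = 0) \<longrightarrow> (\<forall>j<K. a j = 0)) \<and>
      C = {(\<lambda>i. \<Sum>j<K. a j * b j i) | a. True})"

text \<open>Minimum rank distance; for a code with fewer than two codewords we use the
  usual convention d = N + 1.\<close>
definition min_rank_dist :: "'k::field set \<Rightarrow> nat \<Rightarrow> (nat \<Rightarrow> 'k::field) set \<Rightarrow> nat" where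
  "min_rank_dist F N C =
     (if \<exists>x\<in>C. \<exists>y\<in>C. x \<noteq> y
      then Min {rk F N (\<lambda>i. x i - y i) | x y. x \<in> C \<and> y \<in> C \<and> x \<noteq> y}
      else N + 1)"

definition span1 :: "(nat \<Rightarrow> 'k::field) \<Rightarrow> (nat \<Rightarrow> 'k::field) set" where
  "span1 v = {(\<lambda>i. a * v i) | a. True}"

definition perp :: "nat \<Rightarrow> (nat \<Rightarrow> 'k::field) set \<Rightarrow> (nat \<Rightarrow> 'k::field) set" where
  "perp N S = {u \<in> vecs N. \<forall>s\<in>S. (\<Sum>i<N. u i * s i) = 0}"

definition elem_ext :: "nat \<Rightarrow> nat \<Rightarrow> (nat \<Rightarrow> nat \<Rightarrow> 'k::field) \<Rightarrow> (nat \<Rightarrow> 'k::field) set \<Rightarrow> (nat \<Rightarrow> 'k::field) set" where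
  "elem_ext r s B C0 =
     {c \<in> vecs (r + s).
        (\<lambda>i. if i < r then c i - (\<Sum>j<s. c (r + j) * B j i) else 0) \<in> C0}"

definition F_matrix :: "'k::field set \<Rightarrow> nat \<Rightarrow> nat \<Rightarrow> (nat \<Rightarrow> nat \<Rightarrow> 'k::field) \<Rightarrow> bool" where
  "F_matrix F a b M \<longleftrightarrow> (\<forall>i<a. \<forall>j<b. M i j \<in> F)"

definition F_invertible :: "'k::field set \<Rightarrow> nat \<Rightarrow> (nat \<Rightarrow> nat \<Rightarrow> 'k::field) \<Rightarrow> bool" where
  "F_invertible F N M \<longleftrightarrow> F_matrix F N N M \<and> (\<exists>M'. F_matrix F N N M' \<and>
     (\<forall>i<N. \<forall>j<N. (\<Sum>k<N. M i k * M' k j) = (if i = j then 1 else 0)) \<and>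
     (\<forall>i<N. \<forall>j<N. (\<Sum>k<N. M' i k * M k j) = (if i = j then 1 else 0)))"

definition vec_mat :: "nat \<Rightarrow> (nat \<Rightarrow> 'k::field) \<Rightarrow> (nat \<Rightarrow> nat \<Rightarrow> 'k::field) \<Rightarrow> (nat \<Rightarrow> 'k::field)" where
  "vec_mat N c M = (\<lambda>j. if j < N then (\<Sum>i<N. c i * M i j) else 0)"

definition rank_equivalent :: "'k::field set \<Rightarrow> nat \<Rightarrow> (nat \<Rightarrow> 'k::field) set \<Rightarrow> (nat \<Rightarrow> 'k::field) set \<Rightarrow> bool" where
  "rank_equivalent F N C C' \<longleftrightarrow>
     (\<exists>M. F_invertible F N M \<and> C' = {vec_mat N c M | c. c \<in> C})"

end

theory Submission
  imports Defs "HOL-Algebra.Algebraic_Closure_Type"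
begin

text \<open>Choose coordinates of v forming a GF(q)-basis of the GF(q)-span of all coordinates and
  permute them to the front; a coordinate permutation is a rank-preserving equivalence. The
  permuted vector w then satisfies w(r+j) = - \<Sum>k<r. B(j,k) w(k) with B over GF(q), so
  c \<bottom> w iff (c(0), ..., c(r-1)) - (c(r), ..., c(n-1)) B \<bottom> (w(0), ..., w(r-1)): the dual code
  of w is the B-elementary extension of the dual C0 of \<langle>(w(0), ..., w(r-1))\<rangle>, an (r, r-1) code.
  A word of rank one is g f with f over GF(q), and g f \<bottom> w contradicts the independence of
  w(0), ..., w(r-1); so nonzero words of C0 have rank at least 2, while w(0) e(1) - w(1) e(0)
  lies in C0 and has rank 2.\<close>

lemma mem_perp_span1_iff:
  "u \<in> perp N (span1 w) \<longleftrightarrow> u \<in> vecs N \<and> (\<Sum>i<N. u i * w i) = (0::'a::field)"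
proof -
  have "(\<forall>s\<in>span1 w. (\<Sum>i<N. u i * s i) = 0) \<longleftrightarrow> (\<Sum>i<N. u i * w i) = 0"
  proof
    assume "\<forall>s\<in>span1 w. (\<Sum>i<N. u i * s i) = 0"
    moreover have "(\<lambda>i. 1 * w i) \<in> span1 w"
      unfolding span1_def by blast
    ultimately show "(\<Sum>i<N. u i * w i) = 0"
      by fastforce
  next
    assume "(\<Sum>i<N. u i * w i) = 0"
    moreover have "(\<Sum>i<N. u i * (a * w i)) = a * (\<Sum>i<N. u i * w i)" for a
      by (simp add: sum_distrib_left algebra_simps)
    ultimately show "\<forall>s\<in>span1 w. (\<Sum>i<N. u i * s i) = 0"
      unfolding span1_def by auto
  qed
  then show ?thesis
    unfolding perp_def by blast
qed

lemma lin_comb_mem_perp: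
  assumes "\<And>j. j < K \<Longrightarrow> b j \<in> perp N S"
  shows "(\<lambda>i. \<Sum>j<K. a j * b j i) \<in> perp N (S :: (nat \<Rightarrow> 'a::field) set)"
  unfolding perp_def
proof (intro CollectI conjI ballI)
  show "(\<lambda>i. \<Sum>j<K. a j * b j i) \<in> vecs N"
    using assms unfolding perp_def vecs_def by simp
  fix s assume "s \<in> S"
  have "(\<Sum>i<N. (\<Sum>j<K. a j * b j i) * s i) = (\<Sum>i<N. \<Sum>j<K. a j * (b j i * s i))"
    by (simp add: sum_distrib_right mult.assoc)
  also have "\<dots> = (\<Sum>j<K. a j * (\<Sum>i<N. b j i * s i))"
    by (subst sum.swap) (simp add: sum_distrib_left)
  also have "\<dots> = 0"
    using assms \<open>s \<in> S\<close> unfolding perp_def by simp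
  finally show "(\<Sum>i<N. (\<Sum>j<K. a j * b j i) * s i) = 0" .
qed

lemma diff_mem_perp:
  assumes "x \<in> perp N S" "y \<in> perp N S"
  shows "(\<lambda>i. x i - y i) \<in> perp N (S :: (nat \<Rightarrow> 'a::field) set)"
  using assms unfolding perp_def vecs_def by (simp add: left_diff_distrib sum_subtractf)

definition perp_basis :: "(nat \<Rightarrow> 'a::field) \<Rightarrow> nat \<Rightarrow> nat \<Rightarrow> 'a" where
  "perp_basis w j i = (if i = Suc j then w 0 else if i = 0 then - w (Suc j) else 0)"

lemma perp_basis_0 [simp]: "perp_basis w j 0 = - w (Suc j)"
  and perp_basis_Suc [simp]: "perp_basis w j (Suc i) = (if i = j then w 0 else 0)"
  by (simp_all add: perp_basis_def)

lemma perp_basis_mem_perp: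
  assumes "j < r"
  shows "perp_basis w j \<in> perp (Suc r) (span1 w)"
proof -
  have "(\<Sum>i<r. perp_basis w j (Suc i) * w (Suc i)) = w 0 * w (Suc j)"
    using assms by (simp add: if_distrib[of "\<lambda>x. x * _"] cong: if_cong)
  then show ?thesis
    using assms unfolding mem_perp_span1_iff vecs_def
    by (auto simp: sum.lessThan_Suc_shift perp_basis_def simp del: sum.lessThan_Suc)
qed

lemma sum_perp_basis_Suc:
  "i < r \<Longrightarrow> (\<Sum>j<r. a j * perp_basis w j (Suc i)) = a i * w 0"
  by (simp add: if_distrib[of "\<lambda>x. _ * x"] cong: if_cong)

lemma perp_span1_eq_perp_basis_combination:
  assumes w0: "w 0 \<noteq> 0" and u: "u \<in> perp (Suc r) (span1 w)"
  shows "u = (\<lambda>i. \<Sum>j<r. u (Suc j) / w 0 * perp_basis w j i)"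
proof
  fix i
  have uv: "u \<in> vecs (Suc r)" and uw: "u 0 * w 0 + (\<Sum>j<r. u (Suc j) * w (Suc j)) = 0"
    using u unfolding mem_perp_span1_iff by (simp_all add: sum.lessThan_Suc_shift del: sum.lessThan_Suc)
  show "u i = (\<Sum>j<r. u (Suc j) / w 0 * perp_basis w j i)"
  proof (cases i)
    case 0
    have "(\<Sum>j<r. u (Suc j) / w 0 * perp_basis w j 0) = - (\<Sum>j<r. u (Suc j) * w (Suc j)) / w 0"
      by (simp add: sum_divide_distrib sum_negf[symmetric])
    also have "\<dots> = u 0"
      using uw w0 by (simp add: add_eq_0_iff)
    finally show ?thesis
      using 0 by simp
  next
    case (Suc i')
    show ?thesis
    proof (cases "i' < r")
      case True
      then show ?thesis
        using Suc w0 sum_perp_basis_Suc[OF True, of "\<lambda>j. u (Suc j) / w 0" w]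
        by (simp del: perp_basis_Suc)
    next
      case False
      then show ?thesis
        using Suc uv by (simp add: vecs_def)
    qed
  qed
qed

lemma lin_code_perp_span1:
  assumes w0: "w 0 \<noteq> (0::'a::field)"
  shows "lin_code (Suc r) r (perp (Suc r) (span1 w))"
  unfolding lin_code_def
proof (intro exI conjI allI impI)
  show "perp_basis w j \<in> vecs (Suc r)" if "j < r" for j
    using perp_basis_mem_perp[OF that, of w] mem_perp_span1_iff by blast
  show "a j = 0" if "\<forall>i. (\<Sum>j<r. a j * perp_basis w j i) = 0" and "j < r" for a j
    using that(1)[rule_format, of "Suc j"] sum_perp_basis_Suc[OF that(2), of a w] w0
    by (simp del: perp_basis_Suc)
  show "perp (Suc r) (span1 w) = {\<lambda>i. \<Sum>j<r. a j * perp_basis w j i | a. True}"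
  proof (intro equalityI subsetI)
    fix u assume u: "u \<in> perp (Suc r) (span1 w)"
    show "u \<in> {\<lambda>i. \<Sum>j<r. a j * perp_basis w j i | a. True}"
    proof (intro CollectI exI conjI TrueI)
      show "u = (\<lambda>i. \<Sum>j<r. u (Suc j) / w 0 * perp_basis w j i)"
        by (rule perp_span1_eq_perp_basis_combination[of w, OF w0 u])
    qed
  next
    fix u assume "u \<in> {\<lambda>i. \<Sum>j<r. a j * perp_basis w j i | a. True}"
    then obtain a where "u = (\<lambda>i. \<Sum>j<r. a j * perp_basis w j i)"
      by blast
    then show "u \<in> perp (Suc r) (span1 w)"
      using lin_comb_mem_perp[of r "perp_basis w" "Suc r" "span1 w" a] perp_basis_mem_perp by blast
  qed
qed

lemma elem_ext_perp_span1:
  assumes B: "\<And>j. j < s \<Longrightarrow> (\<Sum>k<r. B j k * w k) = - w (r + j)"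
  shows "elem_ext r s B (perp r (span1 w)) = perp (r + s) (span1 (w :: nat \<Rightarrow> 'a::field))"
proof (rule Set.set_eqI)
  fix c
  define d where "d i = (if i < r then c i - (\<Sum>j<s. c (r + j) * B j i) else 0)" for i
  have "(\<Sum>i<r. (\<Sum>j<s. c (r + j) * B j i) * w i) = (\<Sum>i<r. \<Sum>j<s. c (r + j) * (B j i * w i))"
    by (simp add: sum_distrib_right mult.assoc)
  also have "\<dots> = (\<Sum>j<s. c (r + j) * (\<Sum>i<r. B j i * w i))"
    by (subst sum.swap) (simp add: sum_distrib_left)
  also have "\<dots> = - (\<Sum>j<s. c (r + j) * w (r + j))"
    by (simp add: B sum_negf)
  finally have "(\<Sum>i<r. d i * w i) = (\<Sum>i<r. c i * w i) + (\<Sum>j<s. c (r + j) * w (r + j))"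
    by (simp add: d_def left_diff_distrib sum_subtractf)
  also have "\<dots> = (\<Sum>i<r + s. c i * w i)"
    by (induction s) (simp_all add: add.assoc)
  finally have "(\<Sum>i<r. d i * w i) = (\<Sum>i<r + s. c i * w i)" .
  moreover have "d \<in> vecs r"
    by (simp add: d_def vecs_def)
  ultimately show "c \<in> elem_ext r s B (perp r (span1 w)) \<longleftrightarrow> c \<in> perp (r + s) (span1 w)"
    unfolding elem_ext_def mem_perp_span1_iff d_def[abs_def] by simp
qed

definition perm_matrix :: "(nat \<Rightarrow> nat) \<Rightarrow> nat \<Rightarrow> nat \<Rightarrow> 'a::field" where
  "perm_matrix p i j = (if i = p j then 1 else 0)"

lemma vec_mat_perm_matrix:
  assumes "\<And>j. j < n \<Longrightarrow> p j < n"
  shows "vec_mat n c (perm_matrix p) = (\<lambda>j. if j < n then c (p j) else 0)"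
  using assms by (auto simp: vec_mat_def perm_matrix_def if_distrib[of "\<lambda>x. _ * x"] cong: if_cong)

lemma F_invertible_perm_matrix:
  assumes "0 \<in> F" "1 \<in> F" and p: "bij_betw p {..<n} {..<n}"
  shows "F_invertible F n (perm_matrix p)"
  unfolding F_invertible_def
proof (intro conjI exI)
  show "F_matrix F n n (perm_matrix p)" "F_matrix F n n (\<lambda>i j. perm_matrix p j i)"
    using assms unfolding F_matrix_def perm_matrix_def by auto
  have "(\<Sum>k<n. perm_matrix p i k * perm_matrix p j k) = (if i = j then 1 else 0)"
    if "i < n" "j < n" for i j
  proof -
    have "(\<Sum>k<n. perm_matrix p i k * perm_matrix p j k)
        = (\<Sum>k<n. (\<lambda>t. if i = t then if j = t then 1 else 0 else 0) (p k))"
      by (intro sum.cong) (auto simp: perm_matrix_def)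
    also have "\<dots> = (\<Sum>t<n. if i = t then if j = t then 1 else 0 else 0)"
      using sum.reindex_bij_betw[OF p] .
    finally show ?thesis
      using that by (cases "i = j") simp_all
  qed
  then show "\<forall>i<n. \<forall>j<n. (\<Sum>k<n. perm_matrix p i k * perm_matrix p j k) = (if i = j then 1 else 0)"
    by blast
  have "(\<Sum>k<n. perm_matrix p k i * perm_matrix p k j) = (if i = j then 1 else 0)"
    if "i < n" "j < n" for i j
  proof -
    have "(\<Sum>k<n. perm_matrix p k i * perm_matrix p k j)
        = (\<Sum>k<n. if p i = k then if p j = p i then 1 else 0 else 0)"
      by (intro sum.cong) (auto simp: perm_matrix_def)
    also have "\<dots> = (if p j = p i then 1 else 0)"
      using bij_betwE[OF p] that by simp
    also have "\<dots> = (if i = j then 1 else 0)"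
      using bij_betw_imp_inj_on[OF p] that by (auto dest: inj_onD)
    finally show ?thesis .
  qed
  then show "\<forall>i<n. \<forall>j<n. (\<Sum>k<n. perm_matrix p k i * perm_matrix p k j) = (if i = j then 1 else 0)"
    by blast
qed

lemma rank_equivalent_perp_span1_permute:
  assumes "0 \<in> F" "1 \<in> F" and p: "bij_betw p {..<n} {..<n}"
  shows "rank_equivalent F n (perp n (span1 v)) (perp n (span1 (v \<circ> p)))"
proof -
  have pn: "p j < n" if "j < n" for j
    using bij_betwE[OF p] that by blast
  have vm: "vec_mat n c (perm_matrix p) = (\<lambda>j. if j < n then c (p j) else 0)" for c :: "nat \<Rightarrow> 'a"
    using vec_mat_perm_matrix[of n p] pn by blast
  have reindex: "(\<Sum>j<n. c (p j) * v (p j)) = (\<Sum>i<n. c i * v i)" for c :: "nat \<Rightarrow> 'a"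
    using sum.reindex_bij_betw[OF p, of "\<lambda>i. c i * v i"] .
  have "{vec_mat n c (perm_matrix p) | c. c \<in> perp n (span1 v)} = perp n (span1 (v \<circ> p))"
  proof (intro equalityI subsetI)
    fix c' assume "c' \<in> {vec_mat n c (perm_matrix p) | c. c \<in> perp n (span1 v)}"
    then obtain c where "c \<in> perp n (span1 v)" and c': "c' = (\<lambda>j. if j < n then c (p j) else 0)"
      unfolding vm by blast
    then show "c' \<in> perp n (span1 (v \<circ> p))"
      using reindex[of c] by (simp add: mem_perp_span1_iff vecs_def)
  next
    fix c' assume c': "c' \<in> perp n (span1 (v \<circ> p))"
    define c where "c i = (if i < n then c' (inv_into {..<n} p i) else 0)" for i
    have cp: "c (p j) = c' j" if "j < n" for j
      using that pn bij_betw_inv_into_left[OF p] by (simp add: c_def)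
    have "(\<Sum>i<n. c i * v i) = (\<Sum>j<n. c (p j) * v (p j))"
      using reindex[of c] by simp
    also have "\<dots> = (\<Sum>j<n. c' j * (v \<circ> p) j)"
      by (rule sum.cong) (simp_all add: cp)
    also have "\<dots> = 0"
      using c' by (simp add: mem_perp_span1_iff)
    finally have "c \<in> perp n (span1 v)"
      by (simp add: mem_perp_span1_iff vecs_def c_def)
    moreover have "vec_mat n c (perm_matrix p) = c'"
      using c' by (auto simp: vm cp mem_perp_span1_iff vecs_def)
    ultimately show "c' \<in> {vec_mat n c (perm_matrix p) | c. c \<in> perp n (span1 v)}"
      by blast
  qed
  then show ?thesis
    unfolding rank_equivalent_def using F_invertible_perm_matrix[OF assms] by blast
qed

lemma bij_betw_lessThan_prefix:
  assumes "distinct js" "set js \<subseteq> {..<n}"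
  obtains p where "bij_betw p {..<n} {..<n}" "\<And>k. k < length js \<Longrightarrow> p k = js ! k"
proof
  define L where "L = js @ filter (\<lambda>i. i \<notin> set js) [0..<n]"
  have "distinct L" "set L = {..<n}"
    using assms unfolding L_def by auto
  moreover from this have "length L = n"
    using distinct_card by fastforce
  ultimately show "bij_betw ((!) L) {..<n} {..<n}"
    using bij_betw_nth by fastforce
  show "L ! k = js ! k" if "k < length js" for k
    using that by (simp add: L_def nth_append)
qed

lemma F_indep_cong:
  assumes "\<And>k. k < d \<Longrightarrow> e k = e' k"
  shows "F_indep F e d \<longleftrightarrow> F_indep F e' d"
proof -
  have "(\<Sum>j<d. c j * e j) = (\<Sum>j<d. c j * e' j)" for c
    using assms by (intro sum.cong) auto
  then show ?thesis
    unfolding F_indep_def by simp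
qed

lemma subfield_closed:
  assumes "Defs.subfield F"
  shows "0 \<in> F" "1 \<in> F" "x \<in> F \<Longrightarrow> - x \<in> F"
  using assms unfolding Defs.subfield_def by auto

interpretation type_ring: ring "ring_of_type_algebra :: 'a::field ring"
  by rule

declare type_ring.Span.simps [simp del]

lemma ring_of_type_algebra_simps [simp]:
  "carrier (ring_of_type_algebra :: 'a::field ring) = UNIV"
  "monoid.mult (ring_of_type_algebra :: 'a ring) = (*)"
  "one (ring_of_type_algebra :: 'a ring) = 1"
  "zero (ring_of_type_algebra :: 'a ring) = 0"
  "add (ring_of_type_algebra :: 'a ring) = (+)"
  by (simp_all add: ring_of_type_algebra_def)

lemma type_ring_a_inv [simp]: "a_inv ring_of_type_algebra x = - (x :: 'a::field)"
  by (rule type_ring.minus_equality) auto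

lemma type_ring_m_inv [simp]: "(x :: 'a::field) \<noteq> 0 \<Longrightarrow> m_inv ring_of_type_algebra x = inverse x"
  by (rule type_ring.inv_char) auto

lemma subfield_imp_Subrings_subfield:
  assumes "Defs.subfield F"
  shows "Subrings.subfield F (ring_of_type_algebra :: 'a::field ring)"
proof (rule field.subfieldI'[OF field_from_type_algebra])
  show "subring F (ring_of_type_algebra :: 'a ring)"
    using assms unfolding Defs.subfield_def by (intro type_ring.subringI) auto
  show "inv\<^bsub>ring_of_type_algebra\<^esub> k \<in> F" if "k \<in> F - {\<zero>\<^bsub>ring_of_type_algebra\<^esub>}" for k
    using assms that unfolding Defs.subfield_def by auto
qed

lemma type_ring_combine_eq_sum:
  "type_ring.combine Ks Us = (\<Sum>j<min (length Ks) (length Us). Ks ! j * Us ! j)"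
proof (induction Ks arbitrary: Us)
  case (Cons k Ks)
  then show ?case
    by (cases Us) (simp_all add: sum.lessThan_Suc_shift del: sum.lessThan_Suc)
qed simp

context
  fixes F :: "'a::field set"
  assumes F: "Defs.subfield F"
begin

private lemmas K = subfield_imp_Subrings_subfield[OF F]

lemma F_span_eq_Span: "F_span F (set Us) = type_ring.Span F Us"
proof
  show "F_span F (set Us) \<subseteq> type_ring.Span F Us"
  proof
    fix x assume "x \<in> F_span F (set Us)"
    then obtain d :: nat and c e where ce: "\<And>j. j < d \<Longrightarrow> c j \<in> F \<and> e j \<in> set Us"
      and x: "x = (\<Sum>j<d. c j * e j)"
      unfolding F_span_def by auto
    have "(\<Sum>j<d'. c j * e j) \<in> type_ring.Span F Us" if "d' \<le> d" for d'
      using that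
    proof (induction d')
      case 0
      then show ?case
        using type_ring.Span_subgroup_props(2)[OF K, of Us] by simp
    next
      case (Suc d')
      have "e d' \<in> type_ring.Span F Us"
        using type_ring.Span_base_incl[OF K, of Us] ce Suc.prems by auto
      then have "c d' * e d' \<in> type_ring.Span F Us"
        using type_ring.Span_smult_closed[OF K, of Us "c d'" "e d'"] ce Suc.prems by auto
      then show ?case
        using Suc type_ring.Span_subgroup_props(3)[OF K, of Us] by simp
    qed
    then show "x \<in> type_ring.Span F Us"
      using x by simp
  qed
  show "type_ring.Span F Us \<subseteq> F_span F (set Us)"
  proof
    fix x assume "x \<in> type_ring.Span F Us"
    then obtain Ks where Ks: "set Ks \<subseteq> F" "length Ks = length Us" "x = type_ring.combine Ks Us"
      using type_ring.Span_mem_iff_length_version[OF K, of Us x] by auto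
    then have "x = (\<Sum>j<length Us. Ks ! j * Us ! j)"
      by (simp add: type_ring_combine_eq_sum)
    moreover have "\<forall>j<length Us. Ks ! j \<in> F \<and> Us ! j \<in> set Us"
      using Ks by auto
    ultimately show "x \<in> F_span F (set Us)"
      unfolding F_span_def by blast
  qed
qed

lemma F_indep_iff_independent: "F_indep F e d \<longleftrightarrow> type_ring.independent F (map e [0..<d])"
proof
  assume indep: "F_indep F e d"
  show "type_ring.independent F (map e [0..<d])"
  proof (rule type_ring.trivial_combine_imp_independent[OF K])
    show "set (map e [0..<d]) \<subseteq> carrier ring_of_type_algebra"
      by simp
    fix Ks assume Ks: "set Ks \<subseteq> F" "type_ring.combine Ks (map e [0..<d]) = \<zero>\<^bsub>ring_of_type_algebra\<^esub>"
    define c where "c j = (if j < length Ks then Ks ! j else 0)" for j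
    have "(\<Sum>j<d. c j * e j) = (\<Sum>j<min (length Ks) d. c j * e j)"
      by (rule sum.mono_neutral_right) (auto simp: c_def)
    also have "\<dots> = (\<Sum>j<min (length Ks) d. Ks ! j * e j)"
      by (rule sum.cong) (auto simp: c_def)
    also have "\<dots> = 0"
      using Ks(2) by (simp add: type_ring_combine_eq_sum)
    finally have "(\<Sum>j<d. c j * e j) = 0" .
    moreover have "\<forall>j<d. c j \<in> F"
      using Ks(1) subfield_closed(1)[OF F] by (simp add: c_def subset_iff)
    ultimately have "\<forall>j<d. c j = 0"
      using indep unfolding F_indep_def by blast
    then show "set (take (length (map e [0..<d])) Ks) \<subseteq> {\<zero>\<^bsub>ring_of_type_algebra\<^esub>}"
      by (auto simp: set_conv_nth c_def)
  qed
next
  assume indep: "type_ring.independent F (map e [0..<d])"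
  show "F_indep F e d"
    unfolding F_indep_def
  proof (intro allI impI)
    fix c j assume c: "(\<forall>j<d. c j \<in> F) \<and> (\<Sum>j<d. c j * e j) = 0" and "j < d"
    then have "set (map c [0..<d]) \<subseteq> F"
      by auto
    moreover have "type_ring.combine (map c [0..<d]) (map e [0..<d]) = \<zero>\<^bsub>ring_of_type_algebra\<^esub>"
      using c by (simp add: type_ring_combine_eq_sum)
    ultimately have "set (take (length (map e [0..<d])) (map c [0..<d])) \<subseteq> {\<zero>\<^bsub>ring_of_type_algebra\<^esub>}"
      using type_ring.independent_imp_trivial_combine[OF K indep] by blast
    then show "c j = 0"
      using \<open>j < d\<close> by (auto simp: set_conv_nth)
  qed
qed

lemma F_dim_Span:
  assumes "type_ring.independent F Vs"
  shows "F_dim F (type_ring.Span F Vs) = length Vs"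
  unfolding F_dim_def
proof (rule the_equality)
  have "F_indep F ((!) Vs) (length Vs)"
    using assms by (simp add: F_indep_iff_independent map_nth)
  moreover have "(!) Vs ` {..<length Vs} = set Vs"
    by (auto simp: set_conv_nth)
  ultimately show "\<exists>e. F_indep F e (length Vs) \<and> F_span F (e ` {..<length Vs}) = type_ring.Span F Vs"
    using F_span_eq_Span by metis
next
  fix d assume "\<exists>e. F_indep F e d \<and> F_span F (e ` {..<d}) = type_ring.Span F Vs"
  then obtain e where e: "F_indep F e d" "F_span F (e ` {..<d}) = type_ring.Span F Vs"
    by blast
  have "e ` {..<d} = set (map e [0..<d])"
    by auto
  then have "type_ring.Span F (map e [0..<d]) = type_ring.Span F Vs"
    using e(2) F_span_eq_Span by metis
  moreover have "type_ring.independent F (map e [0..<d])"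
    using e(1) F_indep_iff_independent by blast
  ultimately have "type_ring.dimension d F (type_ring.Span F Vs)"
    using type_ring.dimensionI[OF K, of "map e [0..<d]"] by simp
  then show "d = length Vs"
    using type_ring.dimension_is_inj[OF K] type_ring.dimension_independent[OF assms] by blast
qed

lemma independent_subfamily_exists:
  "distinct ixs \<Longrightarrow> \<exists>js. distinct js \<and> set js \<subseteq> set ixs \<and> type_ring.independent F (map x js)
     \<and> type_ring.Span F (map x js) = type_ring.Span F (map x ixs)"
proof (induction ixs)
  case (Cons i ixs)
  then obtain js where js: "distinct js" "set js \<subseteq> set ixs" "type_ring.independent F (map x js)"
    "type_ring.Span F (map x js) = type_ring.Span F (map x ixs)"
    by auto
  show ?case
  proof (cases "x i \<in> type_ring.Span F (map x ixs)")
    case True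
    have "type_ring.Span F (map x (i # ixs)) = type_ring.Span F (map x ixs)"
    proof
      show "type_ring.Span F (map x (i # ixs)) \<subseteq> type_ring.Span F (map x ixs)"
        using True type_ring.Span_base_incl[OF K, of "map x ixs"]
        by (intro type_ring.mono_Span_subset[OF K]) auto
      show "type_ring.Span F (map x ixs) \<subseteq> type_ring.Span F (map x (i # ixs))"
        using type_ring.mono_Span[OF K, of "map x ixs" "x i"] by simp
    qed
    then show ?thesis
      using js by auto
  next
    case False
    then have "type_ring.independent F (map x (i # js))"
      using js type_ring.li_Cons[of "x i" F "map x js"] by simp
    moreover have "type_ring.Span F (map x (i # js)) = type_ring.Span F (map x (i # ixs))"
      using js(4) by (simp add: type_ring.Span.simps)
    ultimately show ?thesis
      using js Cons.prems by (intro exI[of _ "i # js"]) auto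
  qed
qed simp

lemma rk_basis_coordinates:
  obtains js A where "distinct js" "set js \<subseteq> {..<N}" "length js = rk F N x"
    "F_indep F (\<lambda>k. x (js ! k)) (length js)"
    "\<And>i k. i < N \<Longrightarrow> k < length js \<Longrightarrow> A i k \<in> F"
    "\<And>i. i < N \<Longrightarrow> x i = (\<Sum>k<length js. A i k * x (js ! k))"
proof -
  obtain js where js: "distinct js" "set js \<subseteq> set [0..<N]" "type_ring.independent F (map x js)"
    "type_ring.Span F (map x js) = type_ring.Span F (map x [0..<N])"
    using independent_subfamily_exists[of "[0..<N]" x] by auto
  have "map (\<lambda>k. x (js ! k)) [0..<length js] = map x js"
    by (rule nth_equalityI) simp_all
  then have indep: "F_indep F (\<lambda>k. x (js ! k)) (length js)"
    using js(3) F_indep_iff_independent by simp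
  have "F_span F (x ` {..<N}) = type_ring.Span F (map x [0..<N])"
    using F_span_eq_Span[of "map x [0..<N]"] by (simp add: atLeast0LessThan)
  then have rk: "rk F N x = length js"
    unfolding rk_def using F_dim_Span[OF js(3)] js(4) by simp
  have "\<exists>a. (\<forall>k<length js. a k \<in> F) \<and> x i = (\<Sum>k<length js. a k * x (js ! k))" if "i < N" for i
  proof -
    have "x i \<in> type_ring.Span F (map x js)"
      using js(4) type_ring.Span_base_incl[OF K, of "map x [0..<N]"] that by auto
    then obtain Ks where "set Ks \<subseteq> F" "length Ks = length js" "x i = type_ring.combine Ks (map x js)"
      using type_ring.Span_mem_iff_length_version[OF K, of "map x js"] by auto
    then show ?thesis
      by (intro exI[of _ "(!) Ks"]) (auto simp: type_ring_combine_eq_sum)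
  qed
  then obtain A where "\<And>i. i < N \<Longrightarrow> (\<forall>k<length js. A i k \<in> F) \<and> x i = (\<Sum>k<length js. A i k * x (js ! k))"
    by metis
  then show thesis
    using that[of js A] js(1,2) rk indep by (auto simp: atLeast0LessThan)
qed

lemma F_indep_nonzero:
  assumes indep: "F_indep F e d" and "k < d"
  shows "e k \<noteq> 0"
proof
  assume "e k = 0"
  let ?c = "\<lambda>j. if j = k then 1 else 0 :: 'a"
  have "(\<Sum>j<d. ?c j * e j) = (\<Sum>j<d. if j = k then e k else 0)"
    by (intro sum.cong) auto
  also have "\<dots> = 0"
    using \<open>k < d\<close> \<open>e k = 0\<close> by simp
  finally have "(\<Sum>j<d. ?c j * e j) = 0" .
  moreover have "\<forall>j<d. ?c j \<in> F"
    using subfield_closed[OF F] by simp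
  ultimately have "?c k = 0"
    using indep[unfolded F_indep_def, THEN spec[of _ ?c]] \<open>k < d\<close> by blast
  then show False
    by simp
qed

lemma F_indep_inj_on:
  assumes indep: "F_indep F e d"
  shows "inj_on e {..<d}"
proof (rule inj_onI, rule ccontr)
  fix k l assume k: "k \<in> {..<d}" and l: "l \<in> {..<d}" and "e k = e l" "k \<noteq> l"
  let ?c = "\<lambda>j. if j = k then 1 else if j = l then - 1 else 0 :: 'a"
  have "(\<Sum>j<d. ?c j * e j) = (\<Sum>j<d. (if j = k then e k else 0) - (if j = l then e l else 0))"
    using \<open>k \<noteq> l\<close> by (intro sum.cong) auto
  also have "\<dots> = 0"
    using k l \<open>e k = e l\<close> by (simp add: sum_subtractf)
  finally have "(\<Sum>j<d. ?c j * e j) = 0" .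
  moreover have "\<forall>j<d. ?c j \<in> F"
    using subfield_closed[OF F] by simp
  ultimately have "?c k = 0"
    using indep[unfolded F_indep_def, THEN spec[of _ ?c]] k by blast
  then show False
    by simp
qed

lemma rk_le: "rk F N x \<le> N"
proof -
  obtain js A where "distinct js" "set js \<subseteq> {..<N}" "length js = rk F N x"
    and "F_indep F (\<lambda>k. x (js ! k)) (length js)"
    and "\<And>i k. i < N \<Longrightarrow> k < length js \<Longrightarrow> A i k \<in> F"
    and "\<And>i. i < N \<Longrightarrow> x i = (\<Sum>k<length js. A i k * x (js ! k))"
    using rk_basis_coordinates[of N x] by blast
  then show ?thesis
    by (metis card_lessThan card_mono distinct_card finite_lessThan)
qed

lemma rk_le_card_nonzero_coords: "rk F N x \<le> card (x ` {..<N} - {0})"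
proof -
  obtain js A where "distinct js" and js: "set js \<subseteq> {..<N}" "length js = rk F N x"
    and indep: "F_indep F (\<lambda>k. x (js ! k)) (length js)"
    and "\<And>i k. i < N \<Longrightarrow> k < length js \<Longrightarrow> A i k \<in> F"
    and "\<And>i. i < N \<Longrightarrow> x i = (\<Sum>k<length js. A i k * x (js ! k))"
    using rk_basis_coordinates[of N x] by blast
  have "(\<lambda>k. x (js ! k)) ` {..<length js} \<subseteq> x ` {..<N} - {0}"
    using js(1) F_indep_nonzero[OF indep] nth_mem by fastforce
  then show ?thesis
    using card_inj_on_le[OF F_indep_inj_on[OF indep]] js(2) by simp
qed

lemma rk_le_one_imp_multiples:
  assumes "rk F N x \<le> 1"
  obtains g f where "\<And>i. i < N \<Longrightarrow> f i \<in> F \<and> x i = f i * g"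
proof -
  obtain js A where "distinct js" "set js \<subseteq> {..<N}" and len: "length js = rk F N x"
    and "F_indep F (\<lambda>k. x (js ! k)) (length js)"
    and A: "\<And>i k. i < N \<Longrightarrow> k < length js \<Longrightarrow> A i k \<in> F"
    and x: "\<And>i. i < N \<Longrightarrow> x i = (\<Sum>k<length js. A i k * x (js ! k))"
    using rk_basis_coordinates[of N x] by blast
  show thesis
  proof (cases "length js")
    case 0
    have "x i = 0 * 0" if "i < N" for i
      using x[OF that] 0 by simp
    then show thesis
      using that[of "\<lambda>_. 0" 0] subfield_closed(1)[OF F] by blast
  next
    case (Suc m)
    then have "length js = 1"
      using assms len by simp
    then have "x i = A i 0 * x (js ! 0)" if "i < N" for i
      using x[OF that] by simp
    then show thesis
      using that[of "\<lambda>i. A i 0" "x (js ! 0)"] A \<open>length js = 1\<close> by simp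
  qed
qed

lemma two_le_rk_perp_span1:
  assumes indep: "F_indep F w N" and z: "z \<in> perp N (span1 w)" and "z \<noteq> (\<lambda>i. 0)"
  shows "2 \<le> rk F N z"
proof (rule ccontr)
  assume "\<not> 2 \<le> rk F N z"
  then have "rk F N z \<le> 1"
    by simp
  then obtain g f where gf: "\<And>i. i < N \<Longrightarrow> f i \<in> F \<and> z i = f i * g"
    using rk_le_one_imp_multiples by blast
  have "g * (\<Sum>i<N. f i * w i) = (\<Sum>i<N. z i * w i)"
    by (simp add: sum_distrib_left gf algebra_simps)
  also have "\<dots> = 0"
    using z by (simp add: mem_perp_span1_iff)
  finally have g_sum: "g * (\<Sum>i<N. f i * w i) = 0" .
  have "z i = 0" if "i < N" for i
  proof (cases "g = 0")
    case True
    then show ?thesis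
      using gf[OF that] by simp
  next
    case False
    then have "(\<Sum>i<N. f i * w i) = 0"
      using g_sum by simp
    then have "f i = 0"
      using indep[unfolded F_indep_def, THEN spec[of _ f]] gf that by blast
    then show ?thesis
      using gf[OF that] by simp
  qed
  then have "z = (\<lambda>i. 0)"
    using z by (auto simp: mem_perp_span1_iff vecs_def not_less[symmetric])
  with \<open>z \<noteq> (\<lambda>i. 0)\<close> show False
    by simp
qed

lemma min_rank_dist_perp_span1:
  assumes indep: "F_indep F w (Suc r)"
  shows "min_rank_dist F (Suc r) (perp (Suc r) (span1 w)) = 2"
proof -
  let ?C = "perp (Suc r) (span1 w)"
  have w0: "w 0 \<noteq> 0"
    using F_indep_nonzero[OF indep] by simp
  show ?thesis
  proof (cases r)
    case 0
    have "u = (\<lambda>i. 0)" if "u \<in> ?C" for u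
    proof
      fix i show "u i = 0"
        using that w0 0 by (cases i) (auto simp: mem_perp_span1_iff vecs_def)
    qed
    \<comment> \<open>The \<open>(1, 0)\<close> code has no two distinct words, so the distance is the conventional \<open>N + 1 = 2\<close>.\<close>
    then show ?thesis
      unfolding min_rank_dist_def using 0 by auto
  next
    case (Suc r')
    define S where "S = {rk F (Suc r) (\<lambda>i. x i - y i) | x y. x \<in> ?C \<and> y \<in> ?C \<and> x \<noteq> y}"
    let ?b = "perp_basis w 0"
    have bC: "?b \<in> ?C"
      using perp_basis_mem_perp[of 0 r w] Suc by simp
    have zC: "(\<lambda>i. 0) \<in> ?C"
      by (simp add: mem_perp_span1_iff vecs_def)
    have b_nz: "?b \<noteq> (\<lambda>i. 0)"
    proof
      assume "?b = (\<lambda>i. 0)"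
      then have "?b (Suc 0) = 0"
        by simp
      with w0 show False
        by simp
    qed
    have "rk F (Suc r) ?b \<le> card (?b ` {..<Suc r} - {0})"
      by (rule rk_le_card_nonzero_coords)
    also have "\<dots> \<le> card {w 0, - w 1}"
      by (rule card_mono) (auto simp: perp_basis_def)
    also have "\<dots> \<le> 2"
      by (simp add: card_insert_if)
    finally have rk_b: "rk F (Suc r) ?b = 2"
      using two_le_rk_perp_span1[OF indep bC b_nz] by simp
    have "2 \<in> S"
      unfolding S_def
    proof (intro CollectI exI conjI)
      show "2 = rk F (Suc r) (\<lambda>i. ?b i - (\<lambda>i. 0) i)"
        using rk_b by simp
    qed (use bC zC b_nz in auto)
    moreover have "finite S"
      by (rule finite_subset[of _ "{..Suc r}"]) (auto simp: S_def rk_le)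
    moreover have "2 \<le> s" if "s \<in> S" for s
    proof -
      obtain x y where "s = rk F (Suc r) (\<lambda>i. x i - y i)" "x \<in> ?C" "y \<in> ?C" "x \<noteq> y"
        using \<open>s \<in> S\<close> unfolding S_def by blast
      moreover have "(\<lambda>i. x i - y i) \<noteq> (\<lambda>i. 0)"
        using \<open>x \<noteq> y\<close> by (metis eq_iff_diff_eq_0 ext)
      ultimately show ?thesis
        using two_le_rk_perp_span1[OF indep diff_mem_perp] by blast
    qed
    ultimately have "Min S = 2"
      by (intro Min_eqI) auto
    then show ?thesis
      unfolding min_rank_dist_def S_def using bC zC b_nz by auto
  qed
qed

lemma rk_coordinate_permutation:
  assumes "rk F n v = r"
  obtains p A where "bij_betw p {..<n} {..<n}" "r \<le> n" "F_indep F (v \<circ> p) r"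
    "\<And>j k. j < n - r \<Longrightarrow> k < r \<Longrightarrow> A j k \<in> F"
    "\<And>j. j < n - r \<Longrightarrow> (v \<circ> p) (r + j) = (\<Sum>k<r. A j k * (v \<circ> p) k)"
proof -
  obtain js A where js: "distinct js" "set js \<subseteq> {..<n}" "length js = r"
    and indep: "F_indep F (\<lambda>k. v (js ! k)) (length js)"
    and AF: "\<And>i k. i < n \<Longrightarrow> k < length js \<Longrightarrow> A i k \<in> F"
    and A: "\<And>i. i < n \<Longrightarrow> v i = (\<Sum>k<length js. A i k * v (js ! k))"
    using rk_basis_coordinates[of n v] assms by blast
  obtain p where p: "bij_betw p {..<n} {..<n}" and pjs: "\<And>k. k < r \<Longrightarrow> p k = js ! k"
    using bij_betw_lessThan_prefix[OF js(1,2)] js(3) by blast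
  have "r \<le> n"
    using js by (metis card_lessThan card_mono distinct_card finite_lessThan)
  moreover have "F_indep F (v \<circ> p) r"
    using indep js(3) F_indep_cong[of r "v \<circ> p" "\<lambda>k. v (js ! k)"] pjs by simp
  moreover have "(v \<circ> p) (r + j) = (\<Sum>k<r. A (p (r + j)) k * (v \<circ> p) k)" if "j < n - r" for j
  proof -
    have "p (r + j) < n"
      using bij_betwE[OF p] that by auto
    then show ?thesis
      using A[of "p (r + j)"] js(3) pjs by simp
  qed
  moreover have "A (p (r + j)) k \<in> F" if "j < n - r" "k < r" for j k
    using AF bij_betwE[OF p] that js(3) by auto
  ultimately show thesis
    using that[of p "\<lambda>j. A (p (r + j))"] p by blast
qed

end

theorem corollary1:
  fixes F :: "'k::{field,finite} set" and v :: "nat \<Rightarrow> 'k" and n r :: nat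
  assumes "Defs.subfield F"
    and "v \<in> vecs n"
    and "rk F n v = r"
    and "r \<ge> 1"
  shows "\<exists>B C0. F_matrix F (n - r) r B \<and> lin_code r (r - 1) C0
           \<and> min_rank_dist F r C0 = 2
           \<and> rank_equivalent F n (perp n (span1 v)) (elem_ext r (n - r) B C0)"
proof -
  obtain p A where p: "bij_betw p {..<n} {..<n}" and "r \<le> n" and indep: "F_indep F (v \<circ> p) r"
    and AF: "\<And>j k. j < n - r \<Longrightarrow> k < r \<Longrightarrow> A j k \<in> F"
    and A: "\<And>j. j < n - r \<Longrightarrow> (v \<circ> p) (r + j) = (\<Sum>k<r. A j k * (v \<circ> p) k)"
    using rk_coordinate_permutation[OF assms(1,3)] by blast
  obtain r' where r': "r = Suc r'"
    using assms(4) by (cases r) auto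
  define B where "B j k = - A j k" for j k
  have "F_matrix F (n - r) r B"
    using AF subfield_closed(3)[OF assms(1)] unfolding F_matrix_def B_def by blast
  moreover have "lin_code r (r - 1) (perp r (span1 (v \<circ> p)))"
    using lin_code_perp_span1[of "v \<circ> p" r'] F_indep_nonzero[OF assms(1) indep, of 0] r' by simp
  moreover have "min_rank_dist F r (perp r (span1 (v \<circ> p))) = 2"
    using min_rank_dist_perp_span1[OF assms(1)] indep r' by simp
  moreover have "elem_ext r (n - r) B (perp r (span1 (v \<circ> p))) = perp n (span1 (v \<circ> p))"
    using elem_ext_perp_span1[where s = "n - r" and B = B and w = "v \<circ> p"] A \<open>r \<le> n\<close>
    by (simp add: B_def sum_negf)
  moreover have "rank_equivalent F n (perp n (span1 v)) (perp n (span1 (v \<circ> p)))"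
    using rank_equivalent_perp_span1_permute[OF subfield_closed(1,2)[OF assms(1)] p] .
  ultimately show ?thesis
    by metis
qed

end
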